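(* Let $G$ be a countable infinite discrete group, $X$ an infinite compact Hausdorff space and $\alpha: G\curvearrowright X$ a continuous action such that there is no $G$-invariant regular Borel probability measure on $X$. Consider: (i) $\alpha$ has dynamical comparison; (ii) $\alpha$ has paradoxical comparison; (iii) $\alpha$ has weak paradoxical comparison. Then (i)$\Rightarrow$(ii)$\Rightarrow$(iii). If moreover $\alpha$ is minimal, then (i), (ii), (iii) are equivalent.
   Context: Subequivalence: for closed $F\subset X$ and open $O\subset X$, $F\prec O$ if there exist a finite collection $\mathcal{U}$ of open sets covering $F$ and $s_U\in G$ with the sets $s_UU$, $U\in\mathcal{U}$, pairwise disjoint subsets of $O$; for open $V$, $V\prec O$ means $F\prec O$ for every closed $F\subset V$. Dynamical comparison: $V\prec O$ for every open $V$ and nonempty open $O$ with $\mu(V)<\mu(O)$ for all $G$-invariant regular Borel probability measures $\mu$ (when there are no such measures, this means $V\prec O$ for all open $V$ and nonempty open $O$). Paradoxical comparison: for every nonempty open $O$ and closed $F\subset O$ there are disjoint nonempty open $O_1,O_2\subset O$ with $F\prec O_1$ and $F\prec O_2$. Weak paradoxical comparison: for every closed $F$ and nonempty open $O$ with $F\subset G\cdot O=\bigcup_{g\in G}gO$, one has $F\prec O$. *)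

theory Defs
  imports "HOL-Probability.Probability_Measure" "HOL-Algebra.Group_Action"
begin

definition borel_of :: "'x topology \<Rightarrow> 'x measure" where
  "borel_of X = sigma (topspace X) {U. openin X U}"

definition cont_action :: "('g, 'b) monoid_scheme \<Rightarrow> 'x topology \<Rightarrow> ('g \<Rightarrow> 'x \<Rightarrow> 'x) \<Rightarrow> bool" where
  "cont_action G X \<phi> \<longleftrightarrow> group_action G (topspace X) \<phi> \<and>
     (\<forall>g\<in>carrier G. continuous_map X X (\<phi> g))"

definition inv_regular_borel_prob :: "('g, 'b) monoid_scheme \<Rightarrow> 'x topology \<Rightarrow> ('g \<Rightarrow> 'x \<Rightarrow> 'x) \<Rightarrow> 'x measure \<Rightarrow> bool" where
  "inv_regular_borel_prob G X \<phi> M \<longleftrightarrow>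
     sets M = sets (borel_of X) \<and> space M = topspace X \<and> prob_space M \<and>
     (\<forall>A\<in>sets M. emeasure M A = (SUP K\<in>{K. compactin X K \<and> K \<subseteq> A}. emeasure M K)
                  \<and> emeasure M A = (INF U\<in>{U. openin X U \<and> A \<subseteq> U}. emeasure M U)) \<and>
     (\<forall>g\<in>carrier G. \<forall>A\<in>sets M. emeasure M (\<phi> g -` A \<inter> topspace X) = emeasure M A)"

definition subequiv :: "('g, 'b) monoid_scheme \<Rightarrow> 'x topology \<Rightarrow> ('g \<Rightarrow> 'x \<Rightarrow> 'x) \<Rightarrow> 'x set \<Rightarrow> 'x set \<Rightarrow> bool" where
  "subequiv G X \<phi> F W \<longleftrightarrow>
     (\<exists>Us s. finite Us \<and> (\<forall>U\<in>Us. openin X U) \<and> F \<subseteq> \<Union>Us \<and>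
        (\<forall>U\<in>Us. s U \<in> carrier G \<and> \<phi> (s U) ` U \<subseteq> W) \<and>
        (\<forall>U\<in>Us. \<forall>U'\<in>Us. U \<noteq> U' \<longrightarrow> \<phi> (s U) ` U \<inter> \<phi> (s U') ` U' = {}))"

definition open_subequiv :: "('g, 'b) monoid_scheme \<Rightarrow> 'x topology \<Rightarrow> ('g \<Rightarrow> 'x \<Rightarrow> 'x) \<Rightarrow> 'x set \<Rightarrow> 'x set \<Rightarrow> bool" where
  "open_subequiv G X \<phi> V W \<longleftrightarrow> (\<forall>F. closedin X F \<and> F \<subseteq> V \<longrightarrow> subequiv G X \<phi> F W)"

definition dynamical_comparison :: "('g, 'b) monoid_scheme \<Rightarrow> 'x topology \<Rightarrow> ('g \<Rightarrow> 'x \<Rightarrow> 'x) \<Rightarrow> bool" where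
  "dynamical_comparison G X \<phi> \<longleftrightarrow>
     (\<forall>V W. openin X V \<and> openin X W \<and> W \<noteq> {} \<and>
        (\<forall>M. inv_regular_borel_prob G X \<phi> M \<longrightarrow> measure M V < measure M W)
        \<longrightarrow> open_subequiv G X \<phi> V W)"

definition paradoxical_comparison :: "('g, 'b) monoid_scheme \<Rightarrow> 'x topology \<Rightarrow> ('g \<Rightarrow> 'x \<Rightarrow> 'x) \<Rightarrow> bool" where
  "paradoxical_comparison G X \<phi> \<longleftrightarrow>
     (\<forall>W F. openin X W \<and> W \<noteq> {} \<and> closedin X F \<and> F \<subseteq> W \<longrightarrow>
        (\<exists>W1 W2. openin X W1 \<and> openin X W2 \<and> W1 \<noteq> {} \<and> W2 \<noteq> {} \<and>
           W1 \<subseteq> W \<and> W2 \<subseteq> W \<and> W1 \<inter> W2 = {} \<and>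
           subequiv G X \<phi> F W1 \<and> subequiv G X \<phi> F W2))"

definition weak_paradoxical_comparison :: "('g, 'b) monoid_scheme \<Rightarrow> 'x topology \<Rightarrow> ('g \<Rightarrow> 'x \<Rightarrow> 'x) \<Rightarrow> bool" where
  "weak_paradoxical_comparison G X \<phi> \<longleftrightarrow>
     (\<forall>F W. closedin X F \<and> openin X W \<and> W \<noteq> {} \<and>
        F \<subseteq> (\<Union>g\<in>carrier G. \<phi> g ` W) \<longrightarrow> subequiv G X \<phi> F W)"

definition minimal_action :: "('g, 'b) monoid_scheme \<Rightarrow> 'x topology \<Rightarrow> ('g \<Rightarrow> 'x \<Rightarrow> 'x) \<Rightarrow> bool" where
  "minimal_action G X \<phi> \<longleftrightarrow>
     (\<forall>x\<in>topspace X. X closure_of (orbit G \<phi> x) = topspace X)"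

end

(*
  Without invariant measures, dynamical comparison just says that every closed set is
  subequivalent to every nonempty open set.  For (i) => (ii), this already forces every nonempty
  open W to be infinite (X itself is subequivalent to W through finitely many injective maps),
  so W contains two points, and Hausdorff separation splits W into two disjoint open pieces.
  For (ii) => (iii), compactness covers F by finitely many translates of W; induct on their
  number.  A closed set subequivalent to W can be pushed into a closed subset of W, so
  paradoxical comparison puts two such pieces into disjoint open halves of W, and their union
  is subequivalent to W.  Under minimality the translates of any nonempty open set cover X, so
  weak paradoxical comparison gives back the characterisation of (i).
*)
theory Submission
  imports Defs "HOL-Analysis.Abstract_Topological_Spaces"
begin

no_notation eq_closure_of (\<open>closure'_of\<index>\<close>)

lemma subequivE:
  assumes "subequiv G X \<phi> F W"
  obtains Us s where "finite Us" "\<forall>U\<in>Us. openin X U" "F \<subseteq> \<Union>Us"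
    "\<forall>U\<in>Us. s U \<in> carrier G \<and> \<phi> (s U) ` U \<subseteq> W"
    "\<forall>U\<in>Us. \<forall>U'\<in>Us. U \<noteq> U' \<longrightarrow> \<phi> (s U) ` U \<inter> \<phi> (s U') ` U' = {}"
  using assms unfolding subequiv_def by (elim exE conjE) (rule that)

lemma subequivI_indexed:
  assumes "finite I" "\<And>i. i \<in> I \<Longrightarrow> openin X (P i)" "F \<subseteq> (\<Union>i\<in>I. P i)"
    and "\<And>i. i \<in> I \<Longrightarrow> a i \<in> carrier G \<and> \<phi> (a i) ` P i \<subseteq> W"
    and "\<And>i j. i \<in> I \<Longrightarrow> j \<in> I \<Longrightarrow> i \<noteq> j \<Longrightarrow> \<phi> (a i) ` P i \<inter> \<phi> (a j) ` P j = {}"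
  shows "subequiv G X \<phi> F W"
proof -
  let ?i = "inv_into I P"
  have i: "?i U \<in> I" "P (?i U) = U" if "U \<in> P ` I" for U
    using that by (simp_all add: inv_into_into f_inv_into_f)
  show ?thesis
    unfolding subequiv_def
  proof (intro exI[of _ "P ` I"] exI[of _ "\<lambda>U. a (?i U)"] conjI ballI impI)
    show "finite (P ` I)" "F \<subseteq> \<Union> (P ` I)"
      using assms(1,3) by auto
  next
    fix U assume "U \<in> P ` I"
    then show "openin X U" "a (?i U) \<in> carrier G" "\<phi> (a (?i U)) ` U \<subseteq> W"
      using assms(2,4)[OF i(1)] i(2) by metis+
  next
    fix U U' assume UU: "U \<in> P ` I" "U' \<in> P ` I" "U \<noteq> U'"
    then have "?i U \<noteq> ?i U'"
      using i(2) by metis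
    then show "\<phi> (a (?i U)) ` U \<inter> \<phi> (a (?i U')) ` U' = {}"
      using assms(5)[OF i(1) i(1)] i(2) UU(1,2) by metis
  qed
qed

lemma subequiv_empty: "subequiv G X \<phi> {} W"
  unfolding subequiv_def by (rule exI[of _ "{}"]) auto

lemma subequiv_mono:
  assumes "subequiv G X \<phi> F W" "F' \<subseteq> F" "W \<subseteq> W'"
  shows "subequiv G X \<phi> F' W'"
proof -
  obtain Us s where U: "finite Us" "\<forall>U\<in>Us. openin X U" "F \<subseteq> \<Union>Us"
    "\<forall>U\<in>Us. s U \<in> carrier G \<and> \<phi> (s U) ` U \<subseteq> W"
    "\<forall>U\<in>Us. \<forall>U'\<in>Us. U \<noteq> U' \<longrightarrow> \<phi> (s U) ` U \<inter> \<phi> (s U') ` U' = {}"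
    using assms(1) by (rule subequivE)
  have "F' \<subseteq> \<Union>Us"
    using assms(2) U(3) by (rule subset_trans)
  moreover have "\<forall>U\<in>Us. s U \<in> carrier G \<and> \<phi> (s U) ` U \<subseteq> W'"
    using U(4) assms(3) by fast
  ultimately show ?thesis
    unfolding subequiv_def using U(1,2,5) by (intro exI[of _ Us] exI[of _ s] conjI)
qed

lemma subequiv_Un:
  assumes "subequiv G X \<phi> F1 W1" "subequiv G X \<phi> F2 W2" "W1 \<inter> W2 = {}"
  shows "subequiv G X \<phi> (F1 \<union> F2) (W1 \<union> W2)"
proof -
  obtain Us s where U: "finite Us" "\<forall>U\<in>Us. openin X U" "F1 \<subseteq> \<Union>Us"
    "\<forall>U\<in>Us. s U \<in> carrier G \<and> \<phi> (s U) ` U \<subseteq> W1"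
    "\<forall>U\<in>Us. \<forall>U'\<in>Us. U \<noteq> U' \<longrightarrow> \<phi> (s U) ` U \<inter> \<phi> (s U') ` U' = {}"
    using assms(1) by (rule subequivE)
  obtain Vs t where V: "finite Vs" "\<forall>V\<in>Vs. openin X V" "F2 \<subseteq> \<Union>Vs"
    "\<forall>V\<in>Vs. t V \<in> carrier G \<and> \<phi> (t V) ` V \<subseteq> W2"
    "\<forall>V\<in>Vs. \<forall>V'\<in>Vs. V \<noteq> V' \<longrightarrow> \<phi> (t V) ` V \<inter> \<phi> (t V') ` V' = {}"
    using assms(2) by (rule subequivE)
  define r where "r U = (if U \<in> Us then s U else t U)" for U
  have r1: "r U \<in> carrier G" "\<phi> (r U) ` U \<subseteq> W1" if "U \<in> Us" for U
    using U(4) that unfolding r_def by simp_all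
  have r2: "r V \<in> carrier G" "\<phi> (r V) ` V \<subseteq> W2" if "V \<in> Vs" "V \<notin> Us" for V
    using V(4) that unfolding r_def by simp_all
  have "\<forall>U\<in>Us \<union> Vs. r U \<in> carrier G \<and> \<phi> (r U) ` U \<subseteq> W1 \<union> W2"
    using r1 r2 by blast
  moreover have "\<phi> (r U) ` U \<inter> \<phi> (r U') ` U' = {}"
    if UU': "U \<in> Us \<union> Vs" "U' \<in> Us \<union> Vs" "U \<noteq> U'" for U U'
  proof (cases "U \<in> Us"; cases "U' \<in> Us")
    assume "U \<in> Us" "U' \<in> Us"
    then show ?thesis
      using U(5) UU'(3) unfolding r_def by simp
  next
    assume "U \<in> Us" "U' \<notin> Us"
    then show ?thesis
      using r1(2)[of U] r2(2)[of U'] UU'(2) assms(3) by blast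
  next
    assume "U \<notin> Us" "U' \<in> Us"
    then show ?thesis
      using r2(2)[of U] r1(2)[of U'] UU'(1) assms(3) by blast
  next
    assume "U \<notin> Us" "U' \<notin> Us"
    then show ?thesis
      using V(5) UU' unfolding r_def by simp
  qed
  ultimately show ?thesis
    unfolding subequiv_def using U(1-3) V(1-3)
    by (intro exI[of _ "Us \<union> Vs"] exI[of _ r] conjI ballI impI) auto
qed

lemma compactin_indexed_finite_subcover:
  assumes "compactin X S" "\<And>i. i \<in> I \<Longrightarrow> openin X (U i)" "S \<subseteq> (\<Union>i\<in>I. U i)"
  obtains J where "J \<subseteq> I" "finite J" "S \<subseteq> (\<Union>i\<in>J. U i)"
proof -
  obtain \<F> where "finite \<F>" "\<F> \<subseteq> U ` I" "S \<subseteq> \<Union>\<F>"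
    using compactinD[OF assms(1), of "U ` I"] assms(2,3) by auto
  then show ?thesis
    using finite_subset_image that by metis
qed

lemma regular_space_closed_shrinking:
  assumes "regular_space X" "compactin X F"
    and "\<And>i. i \<in> I \<Longrightarrow> openin X (U i)" "F \<subseteq> (\<Union>i\<in>I. U i)"
  obtains C where "\<And>i. i \<in> I \<Longrightarrow> closedin X (C i) \<and> C i \<subseteq> U i" "F \<subseteq> (\<Union>i\<in>I. C i)"
proof -
  define \<N> where "\<N> = {N. openin X N \<and> (\<exists>i\<in>I. X closure_of N \<subseteq> U i)}"
  have "F \<subseteq> \<Union>\<N>"
  proof
    fix x assume "x \<in> F"
    then obtain i where i: "i \<in> I" "x \<in> U i"
      using assms(4) by blast
    have "neighbourhood_base_of (closedin X) X"
      using assms(1) by (simp add: neighbourhood_base_of_closedin)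
    then have "\<exists>N V. openin X N \<and> closedin X V \<and> x \<in> N \<and> N \<subseteq> V \<and> V \<subseteq> U i"
      unfolding neighbourhood_base_of using assms(3)[OF i(1)] i(2) by simp
    then obtain N V where N: "openin X N" "x \<in> N" and "closedin X V" "N \<subseteq> V" "V \<subseteq> U i"
      by blast
    then have "X closure_of N \<subseteq> U i"
      using closure_of_minimal by (metis subset_trans)
    then show "x \<in> \<Union>\<N>"
      unfolding \<N>_def using N i(1) by blast
  qed
  then obtain \<F> where \<F>: "finite \<F>" "\<F> \<subseteq> \<N>" "F \<subseteq> \<Union>\<F>"
    using compactinD[OF assms(2), of \<N>] unfolding \<N>_def by blast
  show ?thesis
  proof (rule that[of "\<lambda>i. \<Union>N\<in>{N\<in>\<F>. X closure_of N \<subseteq> U i}. X closure_of N"])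
    show "closedin X (\<Union>N\<in>{N\<in>\<F>. X closure_of N \<subseteq> U i}. X closure_of N) \<and>
        (\<Union>N\<in>{N\<in>\<F>. X closure_of N \<subseteq> U i}. X closure_of N) \<subseteq> U i" for i
      using \<F>(1) by (auto intro: closedin_Union)
    show "F \<subseteq> (\<Union>i\<in>I. \<Union>N\<in>{N\<in>\<F>. X closure_of N \<subseteq> U i}. X closure_of N)"
    proof
      fix x assume "x \<in> F"
      then obtain N where "N \<in> \<F>" "x \<in> N"
        using \<F>(3) by blast
      moreover obtain i where "i \<in> I" "X closure_of N \<subseteq> U i"
        using \<F>(2) \<open>N \<in> \<F>\<close> unfolding \<N>_def by blast
      moreover have "openin X N"
        using \<F>(2) \<open>N \<in> \<F>\<close> unfolding \<N>_def by blast
      then have "N \<subseteq> X closure_of N"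
        by (simp add: closure_of_subset openin_subset)
      ultimately show "x \<in> (\<Union>i\<in>I. \<Union>N\<in>{N\<in>\<F>. X closure_of N \<subseteq> U i}. X closure_of N)"
        by blast
    qed
  qed
qed

lemma paradoxical_comparisonD:
  assumes "paradoxical_comparison G X \<phi>" "openin X W" "W \<noteq> {}" "closedin X F" "F \<subseteq> W"
  obtains W1 W2 where "W1 \<subseteq> W" "W2 \<subseteq> W" "W1 \<inter> W2 = {}"
    "subequiv G X \<phi> F W1" "subequiv G X \<phi> F W2"
proof -
  have "openin X W \<and> W \<noteq> {} \<and> closedin X F \<and> F \<subseteq> W"
    using assms(2-5) by blast
  from assms(1)[unfolded paradoxical_comparison_def, rule_format, OF this]
  show ?thesis
    using that by blast
qed

lemma dynamical_comparison_iff_without_invariant_measure: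
  assumes "\<nexists>M. inv_regular_borel_prob G X \<phi> M"
  shows "dynamical_comparison G X \<phi> \<longleftrightarrow>
    (\<forall>F W. closedin X F \<and> openin X W \<and> W \<noteq> {} \<longrightarrow> subequiv G X \<phi> F W)"
proof
  assume "dynamical_comparison G X \<phi>"
  then show "\<forall>F W. closedin X F \<and> openin X W \<and> W \<noteq> {} \<longrightarrow> subequiv G X \<phi> F W"
    using assms closedin_subset[of X] openin_topspace[of X]
    unfolding dynamical_comparison_def open_subequiv_def by blast
next
  assume "\<forall>F W. closedin X F \<and> openin X W \<and> W \<noteq> {} \<longrightarrow> subequiv G X \<phi> F W"
  then show "dynamical_comparison G X \<phi>"
    unfolding dynamical_comparison_def open_subequiv_def by blast
qed

locale continuous_action = group_action G "topspace X" \<phi>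
  for G :: "('g, 'b) monoid_scheme" (structure) and X :: "'x topology" and \<phi> :: "'g \<Rightarrow> 'x \<Rightarrow> 'x" +
  assumes continuous_map_action: "g \<in> carrier G \<Longrightarrow> continuous_map X X (\<phi> g)"
begin

sublocale group G
  using group_hom group_hom.axioms(1) by blast

lemma action_inv_left: "g \<in> carrier G \<Longrightarrow> x \<in> topspace X \<Longrightarrow> \<phi> (inv g) (\<phi> g x) = x"
  using orbit_sym_aux by blast

lemma action_inv_right:
  assumes "g \<in> carrier G" "x \<in> topspace X"
  shows "\<phi> g (\<phi> (inv g) x) = x"
proof -
  have "inv g \<in> carrier G"
    using assms(1) by simp
  then have "\<phi> (inv (inv g)) (\<phi> (inv g) x) = x"
    using assms(2) by (rule orbit_sym_aux) simp
  then show ?thesis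
    using assms(1) by simp
qed

lemma homeomorphic_map_action:
  assumes "g \<in> carrier G"
  shows "homeomorphic_map X X (\<phi> g)"
  unfolding homeomorphic_map_maps homeomorphic_maps_def
proof (intro exI[of _ "\<phi> (inv g)"] conjI ballI)
  show "continuous_map X X (\<phi> g)" "continuous_map X X (\<phi> (inv g))"
    using assms by (simp_all add: continuous_map_action)
  show "\<phi> (inv g) (\<phi> g x) = x" "\<phi> g (\<phi> (inv g) x) = x" if "x \<in> topspace X" for x
    using assms that by (simp_all add: action_inv_left action_inv_right)
qed

lemma openin_action_image: "g \<in> carrier G \<Longrightarrow> openin X U \<Longrightarrow> openin X (\<phi> g ` U)"
  using homeomorphic_map_openness_eq[OF homeomorphic_map_action, of g U] by simp

lemma closedin_action_image: "g \<in> carrier G \<Longrightarrow> closedin X C \<Longrightarrow> closedin X (\<phi> g ` C)"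
  using homeomorphic_map_closedness_eq[OF homeomorphic_map_action, of g C] by simp

lemma subequiv_translate:
  assumes "g \<in> carrier G" "openin X W" "F \<subseteq> \<phi> g ` W"
  shows "subequiv G X \<phi> F W"
  unfolding subequiv_def
proof (intro exI[of _ "{\<phi> g ` W}"] exI[of _ "\<lambda>_. inv g"] conjI ballI impI)
  show "finite {\<phi> g ` W}" "F \<subseteq> \<Union>{\<phi> g ` W}"
    using assms(3) by auto
  show "inv g \<in> carrier G"
    using assms(1) by simp
  fix U assume "U \<in> {\<phi> g ` W}"
  then have U: "U = \<phi> g ` W"
    by simp
  show "openin X U"
    unfolding U using assms(1,2) by (rule openin_action_image)
  have "\<phi> (inv g) (\<phi> g x) = x" if "x \<in> W" for x
    using assms(1) openin_subset[OF assms(2)] that by (simp add: action_inv_left subset_iff)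
  then show "\<phi> (inv g) ` U \<subseteq> W"
    unfolding U by (simp add: image_image)
qed auto

lemma finite_if_subequiv_finite:
  assumes "subequiv G X \<phi> F W" "finite W"
  shows "finite F"
proof -
  obtain Us s where cov: "finite Us" "\<forall>U\<in>Us. openin X U" "F \<subseteq> \<Union>Us"
    "\<forall>U\<in>Us. s U \<in> carrier G \<and> \<phi> (s U) ` U \<subseteq> W"
    using assms(1) by (rule subequivE)
  have "finite U" if U: "U \<in> Us" for U
  proof (rule inj_on_finite[OF _ _ assms(2)])
    have "U \<subseteq> topspace X"
      using cov(2) U by (simp add: openin_subset)
    moreover have "inj_on (\<phi> (s U)) (topspace X)"
      using cov(4) U by (simp add: inj_prop)
    ultimately show "inj_on (\<phi> (s U)) U"
      by (rule inj_on_subset[rotated])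
    show "\<phi> (s U) ` U \<subseteq> W"
      using cov(4) U by blast
  qed
  then have "finite (\<Union>Us)"
    by (intro finite_Union cov(1))
  then show ?thesis
    using cov(3) by (rule finite_subset[rotated])
qed

lemma action_image_comp:
  assumes "g \<in> carrier G" "h \<in> carrier G" "U \<subseteq> topspace X"
  shows "\<phi> (h \<otimes> g) ` {x \<in> U. \<phi> g x \<in> V} = \<phi> h ` (\<phi> g ` U \<inter> V)"
proof -
  have "\<phi> (h \<otimes> g) ` {x \<in> U. \<phi> g x \<in> V} = \<phi> h ` \<phi> g ` {x \<in> U. \<phi> g x \<in> V}"
    unfolding image_image using assms by (intro image_cong) (auto intro!: composition_rule)
  also have "\<phi> g ` {x \<in> U. \<phi> g x \<in> V} = \<phi> g ` U \<inter> V"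
    by blast
  finally show ?thesis .
qed

lemma composite_pieces_disjoint:
  assumes "\<forall>U\<in>Us. \<forall>U'\<in>Us. U \<noteq> U' \<longrightarrow> \<phi> (s U) ` U \<inter> \<phi> (s U') ` U' = {}"
    and "\<forall>V\<in>Vs. \<forall>V'\<in>Vs. V \<noteq> V' \<longrightarrow> \<phi> (t V) ` V \<inter> \<phi> (t V') ` V' = {}"
    and "\<forall>V\<in>Vs. t V \<in> carrier G \<and> V \<subseteq> topspace X"
    and "U \<in> Us" "V \<in> Vs" "U' \<in> Us" "V' \<in> Vs" "(U, V) \<noteq> (U', V')"
  shows "\<phi> (t V) ` (\<phi> (s U) ` U \<inter> V) \<inter> \<phi> (t V') ` (\<phi> (s U') ` U' \<inter> V') = {}"
proof (cases "V = V'")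
  case False
  then show ?thesis
    using assms(2,5,7) by blast
next
  case True
  then have "U \<noteq> U'"
    using assms(8) by blast
  then have "(\<phi> (s U) ` U \<inter> V) \<inter> (\<phi> (s U') ` U' \<inter> V) = {}"
    using assms(1,4,6) by blast
  moreover have "inj_on (\<phi> (t V)) (topspace X)" "V \<subseteq> topspace X"
    using assms(3,5) inj_prop by auto
  ultimately have "\<phi> (t V) ` (\<phi> (s U) ` U \<inter> V) \<inter> \<phi> (t V) ` (\<phi> (s U') ` U' \<inter> V) = {}"
    by (subst inj_on_image_Int[symmetric, of _ "topspace X"]) auto
  then show ?thesis
    using True by simp
qed

lemma subequiv_compose:
  assumes "finite Us" "\<forall>U\<in>Us. openin X U" "\<forall>U\<in>Us. s U \<in> carrier G"
    and "\<forall>U\<in>Us. \<forall>U'\<in>Us. U \<noteq> U' \<longrightarrow> \<phi> (s U) ` U \<inter> \<phi> (s U') ` U' = {}"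
    and "\<forall>x\<in>F. \<exists>U\<in>Us. x \<in> U \<and> \<phi> (s U) x \<in> K"
    and "subequiv G X \<phi> K W"
  shows "subequiv G X \<phi> F W"
proof -
  obtain Vs t where V: "finite Vs" "\<forall>V\<in>Vs. openin X V" "K \<subseteq> \<Union>Vs"
    "\<forall>V\<in>Vs. t V \<in> carrier G \<and> \<phi> (t V) ` V \<subseteq> W"
    "\<forall>V\<in>Vs. \<forall>V'\<in>Vs. V \<noteq> V' \<longrightarrow> \<phi> (t V) ` V \<inter> \<phi> (t V') ` V' = {}"
    using assms(6) by (rule subequivE)
  define P where "P = (\<lambda>(U, V). {x \<in> U. \<phi> (s U) x \<in> V})"
  define a where "a = (\<lambda>(U, V). t V \<otimes> s U)"
  have piece: "a (U, V) \<in> carrier G \<and> \<phi> (a (U, V)) ` P (U, V) = \<phi> (t V) ` (\<phi> (s U) ` U \<inter> V)"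
    if "U \<in> Us" "V \<in> Vs" for U V
    using that assms(2,3) V(4) unfolding P_def a_def by (simp add: action_image_comp openin_subset)
  show ?thesis
  proof (rule subequivI_indexed[of "Us \<times> Vs" X P F a G \<phi> W])
    show "finite (Us \<times> Vs)"
      using assms(1) V(1) by simp
    show "openin X (P i)" if i: "i \<in> Us \<times> Vs" for i
    proof -
      obtain U V where UV: "i = (U, V)" "U \<in> Us" "V \<in> Vs"
        using i by blast
      have "openin X {x \<in> U. \<phi> (s U) x \<in> V}"
        using UV(2,3) assms(2,3) V(2)
        by (intro openin_continuous_map_preimage_gen) (auto intro: continuous_map_action)
      then show ?thesis
        unfolding P_def UV(1) by simp
    qed
    show "F \<subseteq> (\<Union>i\<in>Us \<times> Vs. P i)"
    proof
      fix x assume "x \<in> F"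
      then obtain U where U: "U \<in> Us" "x \<in> U" "\<phi> (s U) x \<in> K"
        using assms(5) by blast
      then obtain V where "V \<in> Vs" "\<phi> (s U) x \<in> V"
        using V(3) by blast
      then show "x \<in> (\<Union>i\<in>Us \<times> Vs. P i)"
        using U by (intro UN_I[of "(U, V)"]) (simp_all add: P_def)
    qed
    show "a i \<in> carrier G \<and> \<phi> (a i) ` P i \<subseteq> W" if i: "i \<in> Us \<times> Vs" for i
    proof -
      obtain U V where UV: "i = (U, V)" "U \<in> Us" "V \<in> Vs"
        using i by blast
      have "\<phi> (t V) ` (\<phi> (s U) ` U \<inter> V) \<subseteq> W"
        using V(4) UV(3) by blast
      then show ?thesis
        using piece[OF UV(2,3)] unfolding UV(1) by simp
    qed
    show "\<phi> (a i) ` P i \<inter> \<phi> (a j) ` P j = {}"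
      if ij_mem: "i \<in> Us \<times> Vs" "j \<in> Us \<times> Vs" and ij_ne: "i \<noteq> j" for i j
    proof -
      obtain U V U' V' where ij: "i = (U, V)" "j = (U', V')"
        and m: "U \<in> Us" "V \<in> Vs" "U' \<in> Us" "V' \<in> Vs"
        using ij_mem by blast
      have "\<forall>V\<in>Vs. t V \<in> carrier G \<and> V \<subseteq> topspace X"
        using V(2,4) by (simp add: openin_subset)
      then show ?thesis
        using composite_pieces_disjoint[OF assms(4) V(5) _ m] piece[OF m(1,2)] piece[OF m(3,4)]
          ij_ne unfolding ij by simp
    qed
  qed
qed

lemma action_translates_cover_if_minimal:
  assumes "minimal_action G X \<phi>" "openin X W" "W \<noteq> {}"
  shows "topspace X \<subseteq> (\<Union>g\<in>carrier G. \<phi> g ` W)"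
proof
  fix x assume x: "x \<in> topspace X"
  obtain w where w: "w \<in> W"
    using assms(3) by blast
  have "W \<subseteq> topspace X"
    using assms(2) by (rule openin_subset)
  then have "w \<in> X closure_of orbit G \<phi> x"
    using assms(1) x w unfolding minimal_action_def by blast
  then obtain g where g: "g \<in> carrier G" "\<phi> g x \<in> W"
    using assms(2) w unfolding in_closure_of orbit_def by blast
  then have "x \<in> \<phi> (inv g) ` W"
    using action_inv_left[OF g(1) x] by (metis image_eqI)
  moreover have "inv g \<in> carrier G"
    using g(1) inv_closed by blast
  ultimately show "x \<in> (\<Union>g\<in>carrier G. \<phi> g ` W)"
    by blast
qed

lemma paradoxical_comparison_if_subequiv_all:
  assumes "Hausdorff_space X" "infinite (topspace X)"
    and subequiv_all: "\<And>F W. closedin X F \<Longrightarrow> openin X W \<Longrightarrow> W \<noteq> {} \<Longrightarrow> subequiv G X \<phi> F W"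
  shows "paradoxical_comparison G X \<phi>"
  unfolding paradoxical_comparison_def
proof (intro allI impI)
  fix W F assume WF: "openin X W \<and> W \<noteq> {} \<and> closedin X F \<and> F \<subseteq> W"
  have "infinite W"
    using finite_if_subequiv_finite[OF subequiv_all[OF closedin_topspace]] WF assms(2) by blast
  then obtain a where a: "a \<in> W"
    by (metis infinite_imp_nonempty ex_in_conv)
  moreover obtain b where b: "b \<in> W - {a}"
    using \<open>infinite W\<close> by (metis infinite_remove infinite_imp_nonempty ex_in_conv)
  moreover have "W \<subseteq> topspace X"
    using WF by (simp add: openin_subset)
  ultimately obtain A B where AB: "openin X A" "openin X B" "a \<in> A" "b \<in> B" "disjnt A B"
    using assms(1) unfolding Hausdorff_space_def by (metis DiffE insertI1 subsetD)
  have W12: "openin X (W \<inter> A)" "openin X (W \<inter> B)" "W \<inter> A \<noteq> {}" "W \<inter> B \<noteq> {}"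
    "W \<inter> A \<inter> (W \<inter> B) = {}"
    using WF AB a b by (auto simp: disjnt_def)
  moreover have "subequiv G X \<phi> F (W \<inter> A)" "subequiv G X \<phi> F (W \<inter> B)"
    using W12 WF subequiv_all by blast+
  ultimately show "\<exists>W1 W2. openin X W1 \<and> openin X W2 \<and> W1 \<noteq> {} \<and> W2 \<noteq> {} \<and> W1 \<subseteq> W \<and> W2 \<subseteq> W \<and>
      W1 \<inter> W2 = {} \<and> subequiv G X \<phi> F W1 \<and> subequiv G X \<phi> F W2"
    by blast
qed

end

locale compact_regular_action = continuous_action +
  assumes compact_space: "compact_space X" and regular_space: "regular_space X"
begin

lemma subequiv_through_closed:
  assumes "closedin X F" "subequiv G X \<phi> F W"
  obtains K where "closedin X K" "K \<subseteq> W" "\<And>W'. subequiv G X \<phi> K W' \<Longrightarrow> subequiv G X \<phi> F W'"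
proof -
  obtain Us s where U: "finite Us" "\<forall>U\<in>Us. openin X U" "F \<subseteq> \<Union>Us"
    "\<forall>U\<in>Us. s U \<in> carrier G \<and> \<phi> (s U) ` U \<subseteq> W"
    "\<forall>U\<in>Us. \<forall>U'\<in>Us. U \<noteq> U' \<longrightarrow> \<phi> (s U) ` U \<inter> \<phi> (s U') ` U' = {}"
    using assms(2) by (rule subequivE)
  obtain C where C: "\<And>U. U \<in> Us \<Longrightarrow> closedin X (C U) \<and> C U \<subseteq> U" "F \<subseteq> (\<Union>U\<in>Us. C U)"
    using regular_space_closed_shrinking[OF regular_space closedin_compact_space[OF compact_space assms(1)],
        of Us "\<lambda>U. U"] U(2,3) by auto
  define K where "K = (\<Union>U\<in>Us. \<phi> (s U) ` C U)"
  show ?thesis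
  proof (rule that)
    show "closedin X K"
      unfolding K_def using U(1,4) C(1) closedin_action_image by (intro closedin_Union) auto
    show "K \<subseteq> W"
      unfolding K_def using U(4) C(1) by blast
    show "subequiv G X \<phi> F W'" if "subequiv G X \<phi> K W'" for W'
    proof (rule subequiv_compose[OF U(1,2) _ U(5) _ that])
      show "\<forall>U\<in>Us. s U \<in> carrier G"
        using U(4) by blast
      show "\<forall>x\<in>F. \<exists>U\<in>Us. x \<in> U \<and> \<phi> (s U) x \<in> K"
      proof
        fix x assume "x \<in> F"
        then obtain U where "U \<in> Us" "x \<in> C U"
          using C(2) by blast
        then show "\<exists>U\<in>Us. x \<in> U \<and> \<phi> (s U) x \<in> K"
          unfolding K_def using C(1) by blast
      qed
    qed
  qed
qed

lemma subequiv_Un_if_paradoxical: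
  assumes "paradoxical_comparison G X \<phi>" "openin X W" "W \<noteq> {}"
    and "closedin X F1" "subequiv G X \<phi> F1 W" "closedin X F2" "subequiv G X \<phi> F2 W"
  shows "subequiv G X \<phi> (F1 \<union> F2) W"
proof -
  obtain K1 where K1: "closedin X K1" "K1 \<subseteq> W" "\<And>W'. subequiv G X \<phi> K1 W' \<Longrightarrow> subequiv G X \<phi> F1 W'"
    using subequiv_through_closed[OF assms(4,5)] by blast
  obtain K2 where K2: "closedin X K2" "K2 \<subseteq> W" "\<And>W'. subequiv G X \<phi> K2 W' \<Longrightarrow> subequiv G X \<phi> F2 W'"
    using subequiv_through_closed[OF assms(6,7)] by blast
  have "closedin X (K1 \<union> K2)" "K1 \<union> K2 \<subseteq> W"
    using K1(1,2) K2(1,2) by (simp_all add: closedin_Un)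
  then obtain W1 W2 where W: "W1 \<subseteq> W" "W2 \<subseteq> W" "W1 \<inter> W2 = {}"
    "subequiv G X \<phi> (K1 \<union> K2) W1" "subequiv G X \<phi> (K1 \<union> K2) W2"
    using paradoxical_comparisonD[OF assms(1-3)] by blast
  have "subequiv G X \<phi> F1 W1" "subequiv G X \<phi> F2 W2"
    using K1(3) K2(3) subequiv_mono[OF W(4)] subequiv_mono[OF W(5)] by blast+
  then have "subequiv G X \<phi> (F1 \<union> F2) (W1 \<union> W2)"
    using W(3) by (rule subequiv_Un)
  then show ?thesis
    by (rule subequiv_mono) (use W(1,2) in auto)
qed

lemma subequiv_if_paradoxical_finite_translates:
  assumes "paradoxical_comparison G X \<phi>" "openin X W" "W \<noteq> {}"
  shows "finite S \<Longrightarrow> S \<subseteq> carrier G \<Longrightarrow> closedin X F \<Longrightarrow> F \<subseteq> (\<Union>g\<in>S. \<phi> g ` W) \<Longrightarrow>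
    subequiv G X \<phi> F W"
proof (induction S arbitrary: F rule: finite_induct)
  case empty
  then show ?case
    using subequiv_empty by simp
next
  case (insert g S)
  have "openin X (\<phi> h ` W)" if "h \<in> insert g S" for h
    using that insert.prems(1) assms(2) openin_action_image by blast
  then obtain C where C: "\<And>h. h \<in> insert g S \<Longrightarrow> closedin X (C h) \<and> C h \<subseteq> \<phi> h ` W"
    and cover: "F \<subseteq> (\<Union>h\<in>insert g S. C h)"
    using regular_space_closed_shrinking[OF regular_space closedin_compact_space[OF compact_space],
        of F "insert g S" "\<lambda>h. \<phi> h ` W"] insert.prems(2,3) by blast
  define F1 where "F1 = F \<inter> C g"
  define F2 where "F2 = F \<inter> (\<Union>h\<in>S. C h)"
  have g: "g \<in> carrier G" and S: "S \<subseteq> carrier G"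
    using insert.prems(1) by simp_all
  have "closedin X F1"
    unfolding F1_def using insert.prems(2) C[of g] by (simp add: closedin_Int)
  have "closedin X F2"
    unfolding F2_def using insert.prems(2) insert.hyps(1) C
    by (intro closedin_Int closedin_Union) auto
  have "F1 \<subseteq> \<phi> g ` W"
    unfolding F1_def using C[of g] by blast
  then have "subequiv G X \<phi> F1 W"
    using g assms(2) by (intro subequiv_translate)
  moreover have "F2 \<subseteq> (\<Union>h\<in>S. \<phi> h ` W)"
    unfolding F2_def using C by blast
  then have "subequiv G X \<phi> F2 W"
    using insert.IH[OF S \<open>closedin X F2\<close>] by blast
  ultimately have "subequiv G X \<phi> (F1 \<union> F2) W"
    using subequiv_Un_if_paradoxical[OF assms] \<open>closedin X F1\<close> \<open>closedin X F2\<close> by blast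
  moreover have "F \<subseteq> F1 \<union> F2"
    using cover unfolding F1_def F2_def by blast
  ultimately show ?case
    by (rule subequiv_mono) simp
qed

lemma weak_paradoxical_comparison_if_paradoxical:
  assumes "paradoxical_comparison G X \<phi>"
  shows "weak_paradoxical_comparison G X \<phi>"
  unfolding weak_paradoxical_comparison_def
proof (intro allI impI)
  fix F W assume "closedin X F \<and> openin X W \<and> W \<noteq> {} \<and> F \<subseteq> (\<Union>g\<in>carrier G. \<phi> g ` W)"
  then have F: "closedin X F" "F \<subseteq> (\<Union>g\<in>carrier G. \<phi> g ` W)" and W: "openin X W" "W \<noteq> {}"
    by simp_all
  have "openin X (\<phi> g ` W)" if "g \<in> carrier G" for g
    using that W(1) by (rule openin_action_image)
  then obtain S where S: "S \<subseteq> carrier G" "finite S" "F \<subseteq> (\<Union>g\<in>S. \<phi> g ` W)"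
    using F(2) by (rule compactin_indexed_finite_subcover[OF closedin_compact_space[OF compact_space F(1)]])
  show "subequiv G X \<phi> F W"
    using subequiv_if_paradoxical_finite_translates[OF assms W S(2,1) F(1) S(3)] .
qed

end

theorem proposition4p6:
  fixes G :: "('g, 'b) monoid_scheme" and X :: "'x topology" and \<phi> :: "'g \<Rightarrow> 'x \<Rightarrow> 'x"
  assumes "group G" and "countable (carrier G)" and "infinite (carrier G)"
    and "compact_space X" and "Hausdorff_space X" and "infinite (topspace X)"
    and "cont_action G X \<phi>"
    and "\<nexists>M. inv_regular_borel_prob G X \<phi> M"
  shows "(dynamical_comparison G X \<phi> \<longrightarrow> paradoxical_comparison G X \<phi>) \<and>
         (paradoxical_comparison G X \<phi> \<longrightarrow> weak_paradoxical_comparison G X \<phi>) \<and>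
         (minimal_action G X \<phi> \<longrightarrow>
            (dynamical_comparison G X \<phi> \<longleftrightarrow> paradoxical_comparison G X \<phi>) \<and>
            (paradoxical_comparison G X \<phi> \<longleftrightarrow> weak_paradoxical_comparison G X \<phi>))"
proof -
  interpret compact_regular_action G X \<phi>
    using assms(4,5,7) compact_Hausdorff_imp_regular_space
    unfolding cont_action_def compact_regular_action_def compact_regular_action_axioms_def
      continuous_action_def continuous_action_axioms_def
    by blast
  have dc_iff: "dynamical_comparison G X \<phi> \<longleftrightarrow>
      (\<forall>F W. closedin X F \<and> openin X W \<and> W \<noteq> {} \<longrightarrow> subequiv G X \<phi> F W)"
    using assms(8) by (rule dynamical_comparison_iff_without_invariant_measure)
  have i_ii: "paradoxical_comparison G X \<phi>" if "dynamical_comparison G X \<phi>"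
    using assms(5,6) by (rule paradoxical_comparison_if_subequiv_all) (use that dc_iff in blast)
  have iii_i: "dynamical_comparison G X \<phi>"
    if "minimal_action G X \<phi>" "weak_paradoxical_comparison G X \<phi>"
    unfolding dc_iff
  proof (intro allI impI)
    fix F W assume FW: "closedin X F \<and> openin X W \<and> W \<noteq> {}"
    then have "F \<subseteq> (\<Union>g\<in>carrier G. \<phi> g ` W)"
      using closedin_subset action_translates_cover_if_minimal[OF that(1)] by (meson subset_trans)
    with FW show "subequiv G X \<phi> F W"
      using that(2) unfolding weak_paradoxical_comparison_def by blast
  qed
  show ?thesis
    using i_ii weak_paradoxical_comparison_if_paradoxical iii_i by blast
qed

end
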